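(* Let $M$ be a right $R$-module and consider: (i) $M$ is $M$-coherent; (ii) the intersection of any two finitely $M$-generated submodules of $M$ is finitely $M$-generated, and $\ker\varphi$ is finitely $M$-generated for every $\varphi\in\mathrm{End}_R(M)$. Then (i)$\Rightarrow$(ii). If moreover $M$ is intrinsically projective, then (i) and (ii) are equivalent.
   Context: $M^{(n)}$ denotes the direct sum of $n$ copies of $M$. A module $N$ is finitely $M$-generated if there is an epimorphism $M^{(n)}\to N$ for some $n>0$. A finitely $M$-generated module $N$ is $M$-coherent if for every $n>0$ and every homomorphism $\rho:M^{(n)}\to N$, $\ker\rho$ is finitely $M$-generated. $M$ is intrinsically projective if for every integer $n>0$, every submodule $N\le M$, every epimorphism $\alpha:M^{(n)}\to N$ and every homomorphism $\beta:M\to N$, there exists $\gamma:M\to M^{(n)}$ with $\alpha\gamma=\beta$. *)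

theory Defs
  imports Main "HOL-Library.Function_Algebras"
begin

text \<open>Right R-modules over a ring R (the type 'r), realised as a carrier set A inside
an ambient abelian group type 'a together with a right action s x r = x r.\<close>

definition is_rmod :: "'a::ab_group_add set \<Rightarrow> ('a \<Rightarrow> 'r::ring_1 \<Rightarrow> 'a) \<Rightarrow> bool" where
  "is_rmod A s \<longleftrightarrow> 0 \<in> A \<and> (\<forall>x\<in>A. \<forall>y\<in>A. x + y \<in> A) \<and> (\<forall>x\<in>A. - x \<in> A)
     \<and> (\<forall>x\<in>A. \<forall>r. s x r \<in> A)
     \<and> (\<forall>x\<in>A. \<forall>y\<in>A. \<forall>r. s (x + y) r = s x r + s y r)
     \<and> (\<forall>x\<in>A. \<forall>r q. s x (r + q) = s x r + s x q)
     \<and> (\<forall>x\<in>A. \<forall>r q. s x (r * q) = s (s x r) q)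
     \<and> (\<forall>x\<in>A. s x 1 = x)"

definition submod :: "'a::ab_group_add set \<Rightarrow> 'a set \<Rightarrow> ('a \<Rightarrow> 'r::ring_1 \<Rightarrow> 'a) \<Rightarrow> bool" where
  "submod N A s \<longleftrightarrow> N \<subseteq> A \<and> is_rmod N s"

definition rhom :: "'a::ab_group_add set \<Rightarrow> ('a \<Rightarrow> 'r::ring_1 \<Rightarrow> 'a)
    \<Rightarrow> 'b::ab_group_add set \<Rightarrow> ('b \<Rightarrow> 'r \<Rightarrow> 'b) \<Rightarrow> ('a \<Rightarrow> 'b) \<Rightarrow> bool" where
  "rhom A s B t f \<longleftrightarrow> (\<forall>x\<in>A. f x \<in> B) \<and> (\<forall>x\<in>A. \<forall>y\<in>A. f (x + y) = f x + f y)
     \<and> (\<forall>x\<in>A. \<forall>r. f (s x r) = t (f x) r)"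

text \<open>The direct sum M^(n) of n copies of M: tuples indexed by {0..<n}, zero elsewhere.\<close>
definition dsum :: "nat \<Rightarrow> 'a::ab_group_add set \<Rightarrow> (nat \<Rightarrow> 'a) set" where
  "dsum n A = {f. (\<forall>i<n. f i \<in> A) \<and> (\<forall>i\<ge>n. f i = 0)}"

definition dact :: "('a \<Rightarrow> 'r \<Rightarrow> 'a) \<Rightarrow> (nat \<Rightarrow> 'a) \<Rightarrow> 'r \<Rightarrow> (nat \<Rightarrow> 'a)" where
  "dact s f r = (\<lambda>i. s (f i) r)"

definition fin_gen :: "'m::ab_group_add set \<Rightarrow> ('m \<Rightarrow> 'r::ring_1 \<Rightarrow> 'm)
    \<Rightarrow> 'b::ab_group_add set \<Rightarrow> ('b \<Rightarrow> 'r \<Rightarrow> 'b) \<Rightarrow> bool" where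
  "fin_gen A s B t \<longleftrightarrow>
     (\<exists>n>0. \<exists>f. rhom (dsum n A) (dact s) B t f \<and> f ` dsum n A = B)"

definition coherent :: "'m::ab_group_add set \<Rightarrow> ('m \<Rightarrow> 'r::ring_1 \<Rightarrow> 'm)
    \<Rightarrow> 'b::ab_group_add set \<Rightarrow> ('b \<Rightarrow> 'r \<Rightarrow> 'b) \<Rightarrow> bool" where
  "coherent A s B t \<longleftrightarrow> fin_gen A s B t \<and>
     (\<forall>n>0. \<forall>\<rho>. rhom (dsum n A) (dact s) B t \<rho> \<longrightarrow>
        fin_gen A s {x \<in> dsum n A. \<rho> x = 0} (dact s))"

definition intr_proj :: "'m::ab_group_add set \<Rightarrow> ('m \<Rightarrow> 'r::ring_1 \<Rightarrow> 'm) \<Rightarrow> bool" where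
  "intr_proj A s \<longleftrightarrow>
     (\<forall>n>0. \<forall>N \<alpha> \<beta>. submod N A s \<and> rhom (dsum n A) (dact s) N s \<alpha> \<and> \<alpha> ` dsum n A = N
        \<and> rhom A s N s \<beta> \<longrightarrow>
        (\<exists>\<gamma>. rhom A s (dsum n A) (dact s) \<gamma> \<and> (\<forall>x\<in>A. \<alpha> (\<gamma> x) = \<beta> x)))"

end

theory Submission
  imports Defs "HOL-Library.Set_Algebras"
begin

text \<open>
  Everything rests on the copairing [f, g] : M^(k+l) \<rightarrow> M of two maps f : M^(k) \<rightarrow> M and
  g : M^(l) \<rightarrow> M. Its kernel projects onto the intersection f(M^(k)) \<inter> g(M^(l)), as
  (u, v) \<mapsto> f u = g (-v); so coherence makes such intersections finitely M-generated, and
  kernels of endomorphisms are kernels of maps out of M^(1). Conversely, pick an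
  epimorphism \<alpha> : M^(m) \<rightarrow> f(M^(k)) \<inter> g(M^(l)).
  Intrinsic projectivity, which extends from M to M^(m) summand by summand, lifts \<alpha> through f
  and -\<alpha> through g to \<gamma> and \<delta>, and then ker [f, g] = (\<gamma>, \<delta>)(M^(m)) + ker f + ker g.
  Splitting M^(n+1) = M^(n) \<oplus> M, induction on n makes every kernel of a map M^(n) \<rightarrow> M
  finitely M-generated.
\<close>

lemma rmodD:
  assumes "is_rmod A s"
  shows rmod_zero: "0 \<in> A"
    and rmod_add: "x \<in> A \<Longrightarrow> y \<in> A \<Longrightarrow> x + y \<in> A"
    and rmod_uminus: "x \<in> A \<Longrightarrow> - x \<in> A"
    and rmod_act: "x \<in> A \<Longrightarrow> s x r \<in> A"
    and rmod_act_add: "x \<in> A \<Longrightarrow> y \<in> A \<Longrightarrow> s (x + y) r = s x r + s y r"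
    and rmod_act_distrib: "x \<in> A \<Longrightarrow> s x (r + q) = s x r + s x q"
    and rmod_act_mult: "x \<in> A \<Longrightarrow> s x (r * q) = s (s x r) q"
    and rmod_act_one: "x \<in> A \<Longrightarrow> s x 1 = x"
  using assms unfolding is_rmod_def by auto

lemma rmod_diff: "is_rmod A s \<Longrightarrow> x \<in> A \<Longrightarrow> y \<in> A \<Longrightarrow> x - y \<in> A"
  using rmod_add rmod_uminus by (metis diff_conv_add_uminus)

lemma rmod_act_zero: assumes "is_rmod A s" shows "s 0 r = 0"
  using rmod_act_add[OF assms rmod_zero rmod_zero, OF assms assms, of r] by simp

lemma rmod_act_uminus: assumes M: "is_rmod A s" and x: "x \<in> A" shows "s (- x) r = - s x r"
  using rmod_act_add[OF M x rmod_uminus[OF M x], of r] rmod_act_zero[OF M, of r]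
  by (simp add: add.inverse_unique[symmetric])

lemma dsum_in: "x \<in> dsum n A \<Longrightarrow> 0 \<in> A \<Longrightarrow> x i \<in> A"
  unfolding dsum_def by (cases "i < n") auto

lemma dsum_0: "dsum 0 A = {0}"
  unfolding dsum_def by auto

lemma dsum_mono: "m \<le> n \<Longrightarrow> 0 \<in> A \<Longrightarrow> dsum m A \<subseteq> dsum n A"
  unfolding dsum_def by auto (metis not_less)

lemma is_rmod_dsum: assumes M: "is_rmod A s" shows "is_rmod (dsum n A) (dact s)"
  unfolding is_rmod_def dsum_def dact_def
  using dsum_in[OF _ rmod_zero[OF M]] rmodD[OF M] rmod_act_zero[OF M] M
  by (auto simp: fun_eq_iff is_rmod_def dsum_def)

lemma rhomD:
  assumes "rhom A s B t f"
  shows rhom_in: "x \<in> A \<Longrightarrow> f x \<in> B"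
    and rhom_add: "x \<in> A \<Longrightarrow> y \<in> A \<Longrightarrow> f (x + y) = f x + f y"
    and rhom_act: "x \<in> A \<Longrightarrow> f (s x r) = t (f x) r"
  using assms unfolding rhom_def by blast+

lemma rhom_zero: assumes "is_rmod A s" "rhom A s B t f" shows "f 0 = 0"
  using rhom_add[OF assms(2) rmod_zero rmod_zero, OF assms(1) assms(1)] by simp

lemma rhom_uminus: assumes M: "is_rmod A s" and f: "rhom A s B t f" and x: "x \<in> A"
  shows "f (- x) = - f x"
  using rhom_add[OF f x rmod_uminus[OF M x]] rhom_zero[OF M f]
  by (simp add: add.inverse_unique[symmetric])

lemma rhom_diff: assumes M: "is_rmod A s" and f: "rhom A s B t f" and "x \<in> A" "y \<in> A"
  shows "f (x - y) = f x - f y"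
  using rhom_add[OF f \<open>x \<in> A\<close> rmod_uminus[OF M \<open>y \<in> A\<close>]] rhom_uminus[OF M f \<open>y \<in> A\<close>]
  by simp

lemma rhom_comp: "rhom A s B t f \<Longrightarrow> rhom B t C u g \<Longrightarrow> rhom A s C u (\<lambda>x. g (f x))"
  unfolding rhom_def by auto

lemma rhom_restrict: "rhom A s B t f \<Longrightarrow> A' \<subseteq> A \<Longrightarrow> rhom A' s B t f"
  unfolding rhom_def by blast

lemma rhom_cod: "rhom A s B t f \<Longrightarrow> f ` A \<subseteq> B' \<Longrightarrow> rhom A s B' t f"
  unfolding rhom_def by blast

lemma rhom_image: "rhom A s B t f \<Longrightarrow> rhom A s (f ` A) t f"
  unfolding rhom_def by blast

lemma rhom_zero_fun: "is_rmod B t \<Longrightarrow> rhom A s B t (\<lambda>_. 0)"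
  unfolding rhom_def using rmod_zero rmod_act_zero by fastforce

lemma rhom_plus: assumes f: "rhom A s C t f" and g: "rhom A s C t g" and C: "is_rmod C t"
  shows "rhom A s C t (\<lambda>x. f x + g x)"
  unfolding rhom_def
  using rhomD[OF f] rhomD[OF g] rmod_add[OF C] rmod_act_add[OF C] by (simp add: ac_simps)

lemma rhom_uminus_fun:
  assumes f: "rhom A s C t f" and C: "is_rmod C t"
  shows "rhom A s C t (\<lambda>x. - f x)"
  unfolding rhom_def
  using rhomD[OF f] rmod_uminus[OF C] rmod_act_uminus[OF C] by (simp add: add.commute)

lemma is_rmod_image: assumes M: "is_rmod A s" and f: "rhom A s B t f" shows "is_rmod (f ` A) t"
  unfolding is_rmod_def
proof (intro conjI ballI allI; (elim imageE)?; hypsubst?)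
  show "0 \<in> f ` A" using rhom_zero[OF M f] rmod_zero[OF M] by force
next
  fix a b r assume a: "a \<in> A" and b: "b \<in> A"
  show "f a + f b \<in> f ` A"
    using rhom_add[OF f a b] rmod_add[OF M a b] by (metis image_eqI)
  have "t (f a + f b) r = f (s (a + b) r)"
    using rhom_add[OF f a b] rhom_act[OF f rmod_add[OF M a b]] by simp
  also have "\<dots> = t (f a) r + t (f b) r"
    using rmod_act_add[OF M a b] rhom_add[OF f rmod_act[OF M a] rmod_act[OF M b]]
      rhom_act[OF f a] rhom_act[OF f b] by simp
  finally show "t (f a + f b) r = t (f a) r + t (f b) r" .
next
  fix a r q assume a: "a \<in> A"
  show "- f a \<in> f ` A" using rhom_uminus[OF M f a] rmod_uminus[OF M a] by (metis image_eqI)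
  show "t (f a) r \<in> f ` A" using rhom_act[OF f a] rmod_act[OF M a] by (metis image_eqI)
  have "t (f a) (r + q) = f (s a r + s a q)"
    using rmod_act_distrib[OF M a] rhom_act[OF f a, of "r + q"] by simp
  then show "t (f a) (r + q) = t (f a) r + t (f a) q"
    using rhom_add[OF f rmod_act[OF M a] rmod_act[OF M a]] rhom_act[OF f a] by simp
  have "t (f a) (r * q) = f (s (s a r) q)"
    using rmod_act_mult[OF M a] rhom_act[OF f a, of "r * q"] by simp
  then show "t (f a) (r * q) = t (t (f a) r) q"
    using rhom_act[OF f rmod_act[OF M a]] rhom_act[OF f a] by simp
  show "t (f a) 1 = f a" using rmod_act_one[OF M a] rhom_act[OF f a, of 1] by simp
qed

lemma submod_image: "is_rmod B t \<Longrightarrow> rhom B t A s f \<Longrightarrow> submod (f ` B) A s"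
  unfolding submod_def using is_rmod_image rhom_in by blast

lemma fin_gen_image:
  assumes "fin_gen A s B t" and "rhom B t C u g"
  shows "fin_gen A s (g ` B) u"
proof -
  obtain n f where n: "n > 0" and f: "rhom (dsum n A) (dact s) B t f" "f ` dsum n A = B"
    using assms(1) unfolding fin_gen_def by blast
  have "rhom (dsum n A) (dact s) (g ` B) u (\<lambda>x. g (f x))"
    using rhom_comp[OF f(1) rhom_image[OF assms(2)]] .
  moreover have "(\<lambda>x. g (f x)) ` dsum n A = g ` B"
    using f(2) by (simp add: image_image[symmetric])
  ultimately show ?thesis unfolding fin_gen_def using n by blast
qed

lemma fin_gen_zero: assumes "is_rmod A s" "is_rmod B t" shows "fin_gen A s {0} t"
proof -
  have "rhom (dsum 1 A) (dact s) {0} t (\<lambda>_. 0)"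
    unfolding rhom_def using rmod_act_zero[OF assms(2)] by simp
  moreover have "(\<lambda>_. 0) ` dsum 1 A = {0}"
    using rmod_zero[OF is_rmod_dsum[OF assms(1)]] by blast
  ultimately show ?thesis unfolding fin_gen_def using zero_less_one by blast
qed

lemma fin_gen_hom_image:
  assumes M: "is_rmod A s" and f: "rhom (dsum n A) (dact s) C t f"
  shows "fin_gen A s (f ` dsum n A) t"
proof (cases "n = 0")
  case True
  then have "f ` dsum n A = {0}" using rhom_zero[OF is_rmod_dsum[OF M] f] by (simp add: dsum_0)
  then show ?thesis using fin_gen_zero[OF M is_rmod_image[OF is_rmod_dsum[OF M] f]] by simp
next
  case False
  then show ?thesis unfolding fin_gen_def using rhom_image[OF f] by blast
qed

definition seq_take :: "nat \<Rightarrow> (nat \<Rightarrow> 'a::zero) \<Rightarrow> nat \<Rightarrow> 'a" where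
  "seq_take k x = (\<lambda>i. if i < k then x i else 0)"

definition seq_drop :: "nat \<Rightarrow> (nat \<Rightarrow> 'a) \<Rightarrow> nat \<Rightarrow> 'a" where
  "seq_drop k x = (\<lambda>i. x (i + k))"

definition seq_shift :: "nat \<Rightarrow> (nat \<Rightarrow> 'a::zero) \<Rightarrow> nat \<Rightarrow> 'a" where
  "seq_shift k v = (\<lambda>i. if i < k then 0 else v (i - k))"

definition seq_single :: "'a::zero \<Rightarrow> nat \<Rightarrow> 'a" where
  "seq_single a = (\<lambda>i. if i = 0 then a else 0)"

definition copair :: "nat \<Rightarrow> ((nat \<Rightarrow> 'a::zero) \<Rightarrow> 'b::plus) \<Rightarrow> ((nat \<Rightarrow> 'a) \<Rightarrow> 'b)
    \<Rightarrow> (nat \<Rightarrow> 'a) \<Rightarrow> 'b" where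
  "copair k f g x = f (seq_take k x) + g (seq_drop k x)"

lemma seq_take_dsum: assumes "0 \<in> A" "x \<in> dsum m A" shows "seq_take k x \<in> dsum k A"
  using dsum_in[OF assms(2,1)] unfolding seq_take_def dsum_def by simp

lemma seq_drop_dsum: "x \<in> dsum (k + l) A \<Longrightarrow> seq_drop k x \<in> dsum l A"
  unfolding seq_drop_def dsum_def by auto

lemma seq_shift_dsum: "0 \<in> A \<Longrightarrow> v \<in> dsum l A \<Longrightarrow> seq_shift k v \<in> dsum (k + l) A"
  unfolding seq_shift_def dsum_def by auto

lemma seq_take_plus_shift:
  "u \<in> dsum k A \<Longrightarrow> seq_take k (u + seq_shift k (v :: nat \<Rightarrow> 'a::ab_group_add)) = u"
  unfolding seq_take_def seq_shift_def dsum_def by (auto simp: fun_eq_iff)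

lemma seq_drop_plus_shift:
  "u \<in> dsum k A \<Longrightarrow> seq_drop k (u + seq_shift k (v :: nat \<Rightarrow> 'a::ab_group_add)) = v"
  unfolding seq_drop_def seq_shift_def dsum_def by (auto simp: fun_eq_iff)

lemma seq_take_plus_drop:
  "(x :: nat \<Rightarrow> 'a::ab_group_add) = seq_take k x + seq_shift k (seq_drop k x)"
  unfolding seq_take_def seq_shift_def seq_drop_def by (auto simp: fun_eq_iff)

lemma dsum_1: "dsum 1 A = seq_single ` A"
  unfolding dsum_def seq_single_def by (auto simp: fun_eq_iff image_iff)

lemma seq_single_0 [simp]: "seq_single a 0 = a"
  unfolding seq_single_def by simp

lemma dsum_1_single: "v \<in> dsum 1 A \<Longrightarrow> seq_single (v 0) = v"
  unfolding dsum_1 by auto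

lemma rhom_seq_take: assumes M: "is_rmod A s"
  shows "rhom (dsum m A) (dact s) (dsum k A) (dact s) (seq_take k)"
  unfolding rhom_def dact_def
  using seq_take_dsum[OF rmod_zero[OF M]] rmod_act_zero[OF M] by (auto simp: fun_eq_iff seq_take_def)

lemma rhom_seq_drop: "rhom (dsum (k + l) A) (dact s) (dsum l A) (dact s) (seq_drop k)"
  unfolding rhom_def dact_def seq_drop_def using seq_drop_dsum by (auto simp: seq_drop_def)

lemma rhom_seq_shift: assumes M: "is_rmod A s"
  shows "rhom (dsum l A) (dact s) (dsum (k + l) A) (dact s) (seq_shift k)"
  unfolding rhom_def dact_def
  using seq_shift_dsum[OF rmod_zero[OF M]] rmod_act_zero[OF M] by (auto simp: fun_eq_iff seq_shift_def)

lemma rhom_seq_single: assumes M: "is_rmod A s"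
  shows "rhom A s (dsum 1 A) (dact s) seq_single"
  unfolding rhom_def dact_def dsum_1
  using rmod_act_zero[OF M] by (auto simp: fun_eq_iff image_iff seq_single_def)

lemma rhom_eval: assumes "is_rmod A s" shows "rhom (dsum n A) (dact s) A s (\<lambda>x. x k)"
  unfolding rhom_def dact_def using dsum_in[OF _ rmod_zero[OF assms]] by auto

lemma rhom_copair:
  assumes M: "is_rmod A s" and C: "is_rmod C t"
    and f: "rhom (dsum k A) (dact s) C t f" and g: "rhom (dsum l A) (dact s) C t g"
  shows "rhom (dsum (k + l) A) (dact s) C t (copair k f g)"
  unfolding copair_def
  using rhom_plus[OF rhom_comp[OF rhom_seq_take[OF M] f] rhom_comp[OF rhom_seq_drop g] C] .

lemma copair_plus_shift:
  "u \<in> dsum k A \<Longrightarrow> copair k f g (u + seq_shift k v) = f u + g v"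
  unfolding copair_def by (simp add: seq_take_plus_shift seq_drop_plus_shift)

lemma dsum_plus_shift:
  assumes M: "is_rmod A s" and "u \<in> dsum k A" "v \<in> dsum l A"
  shows "u + seq_shift k v \<in> dsum (k + l) A"
  using assms dsum_mono[OF le_add1 rmod_zero[OF M]] seq_shift_dsum[OF rmod_zero[OF M]]
    rmod_add[OF is_rmod_dsum[OF M]] by blast

lemma image_copair:
  assumes M: "is_rmod A s"
  shows "copair k f g ` dsum (k + l) A = f ` dsum k A + g ` dsum l A"
proof (intro equalityI subsetI)
  fix y assume "y \<in> copair k f g ` dsum (k + l) A"
  then show "y \<in> f ` dsum k A + g ` dsum l A"
    unfolding copair_def using seq_take_dsum[OF rmod_zero[OF M]] seq_drop_dsum by blast
next
  fix y assume "y \<in> f ` dsum k A + g ` dsum l A"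
  then obtain u v where "u \<in> dsum k A" "v \<in> dsum l A" "y = f u + g v"
    by (auto elim: set_plus_elim)
  then show "y \<in> copair k f g ` dsum (k + l) A"
    using copair_plus_shift dsum_plus_shift[OF M] by (metis image_eqI)
qed

lemma set_plus_subset_rmod: "is_rmod C t \<Longrightarrow> B1 \<subseteq> C \<Longrightarrow> B2 \<subseteq> C \<Longrightarrow> B1 + B2 \<subseteq> C"
  using rmod_add by (blast elim: set_plus_elim)

lemma fin_gen_set_plus:
  assumes M: "is_rmod A s" and C: "is_rmod C t"
    and B1: "fin_gen A s B1 t" "B1 \<subseteq> C" and B2: "fin_gen A s B2 t" "B2 \<subseteq> C"
  shows "fin_gen A s (B1 + B2) t"
proof -
  obtain k f where f: "rhom (dsum k A) (dact s) B1 t f" "f ` dsum k A = B1"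
    using B1 unfolding fin_gen_def by blast
  obtain l g where g: "rhom (dsum l A) (dact s) B2 t g" "g ` dsum l A = B2"
    using B2 unfolding fin_gen_def by blast
  have "rhom (dsum k A) (dact s) C t f"
    using rhom_cod[OF f(1)] f(2) B1(2) by blast
  moreover have "rhom (dsum l A) (dact s) C t g"
    using rhom_cod[OF g(1)] g(2) B2(2) by blast
  ultimately have "rhom (dsum (k + l) A) (dact s) C t (copair k f g)"
    by (rule rhom_copair[OF M C])
  from fin_gen_hom_image[OF M this] show ?thesis
    unfolding image_copair[OF M] f(2) g(2) .
qed

lemma fin_gen_self: assumes M: "is_rmod A s" shows "fin_gen A s A s"
proof -
  have "(\<lambda>x. x 0) ` dsum 1 A = A" unfolding dsum_1 by (simp add: image_image)
  with fin_gen_hom_image[OF M rhom_eval[OF M, of 1 0]] show ?thesis by simp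
qed

lemma ker_dsum_1: "{v \<in> dsum 1 A. g v = 0} = seq_single ` {a \<in> A. g (seq_single a) = 0}"
  unfolding dsum_1 by auto

lemma rhom_eq_copair:
  assumes M: "is_rmod A s" and \<rho>: "rhom (dsum (k + l) A) (dact s) B t \<rho>"
    and x: "x \<in> dsum (k + l) A"
  shows "\<rho> x = copair k \<rho> (\<lambda>v. \<rho> (seq_shift k v)) x"
proof -
  have "seq_take k x \<in> dsum (k + l) A" "seq_shift k (seq_drop k x) \<in> dsum (k + l) A"
    using seq_take_dsum[OF rmod_zero[OF M] x] dsum_mono[OF le_add1 rmod_zero[OF M]]
      seq_shift_dsum[OF rmod_zero[OF M] seq_drop_dsum[OF x]] by blast+
  moreover have "\<rho> x = \<rho> (seq_take k x + seq_shift k (seq_drop k x))"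
    using seq_take_plus_drop[of x k] by (rule arg_cong)
  ultimately show ?thesis unfolding copair_def using rhom_add[OF \<rho>] by simp
qed

lemma intr_proj_lift:
  assumes M: "is_rmod A s" and ip: "intr_proj A s" and N: "submod N A s"
    and \<alpha>: "rhom (dsum n A) (dact s) N s \<alpha>" "\<alpha> ` dsum n A = N"
    and \<beta>: "rhom (dsum m A) (dact s) N s \<beta>"
  shows "\<exists>\<gamma>. rhom (dsum m A) (dact s) (dsum n A) (dact s) \<gamma> \<and> (\<forall>z\<in>dsum m A. \<alpha> (\<gamma> z) = \<beta> z)"
proof (cases "n = 0")
  case True
  then have "N = {0}" using \<alpha>(2) rhom_zero[OF is_rmod_dsum[OF M] \<alpha>(1)] by (simp add: dsum_0)
  then show ?thesis
    using rhom_zero_fun[OF is_rmod_dsum[OF M]] rhom_in[OF \<beta>] rhom_zero[OF is_rmod_dsum[OF M] \<alpha>(1)]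
    by fastforce
next
  case False
  have Mn: "is_rmod (dsum n A) (dact s)" using is_rmod_dsum[OF M] .
  show ?thesis using \<beta>
  proof (induction m arbitrary: \<beta>)
    case 0
    then show ?case
      using rhom_zero_fun[OF Mn] rhom_zero[OF Mn \<alpha>(1)] rhom_zero[OF is_rmod_dsum[OF M] "0.prems"]
      by (auto simp: dsum_0)
  next
    case (Suc m)
    have \<beta>: "rhom (dsum (m + 1) A) (dact s) N s \<beta>" using Suc.prems by simp
    obtain \<gamma>0 where \<gamma>0: "rhom (dsum m A) (dact s) (dsum n A) (dact s) \<gamma>0"
      "\<forall>z\<in>dsum m A. \<alpha> (\<gamma>0 z) = \<beta> z"
      using Suc.IH[OF rhom_restrict[OF \<beta> dsum_mono[OF le_add1 rmod_zero[OF M]]]] by blast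
    have "rhom A s N s (\<lambda>a. \<beta> (seq_shift m (seq_single a)))"
      using rhom_comp[OF rhom_comp[OF rhom_seq_single[OF M] rhom_seq_shift[OF M]] \<beta>] .
    then obtain \<gamma>1 where \<gamma>1: "rhom A s (dsum n A) (dact s) \<gamma>1"
      "\<forall>a\<in>A. \<alpha> (\<gamma>1 a) = \<beta> (seq_shift m (seq_single a))"
      using ip False N \<alpha> unfolding intr_proj_def by blast
    define \<gamma> where "\<gamma> = copair m \<gamma>0 (\<lambda>v. \<gamma>1 (v 0))"
    have "rhom (dsum (m + 1) A) (dact s) (dsum n A) (dact s) \<gamma>"
      unfolding \<gamma>_def using rhom_copair[OF M Mn \<gamma>0(1) rhom_comp[OF rhom_eval[OF M] \<gamma>1(1)]] .
    moreover have "\<alpha> (\<gamma> x) = \<beta> x" if x: "x \<in> dsum (m + 1) A" for x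
    proof -
      have take: "seq_take m x \<in> dsum m A" and drop: "seq_drop m x \<in> dsum 1 A"
        using seq_take_dsum[OF rmod_zero[OF M] x] seq_drop_dsum[OF x] .
      have drop0: "seq_drop m x 0 \<in> A" using dsum_in[OF drop rmod_zero[OF M]] .
      have "\<alpha> (\<gamma> x) = \<alpha> (\<gamma>0 (seq_take m x)) + \<alpha> (\<gamma>1 (seq_drop m x 0))"
        unfolding \<gamma>_def copair_def
        using rhom_add[OF \<alpha>(1) rhom_in[OF \<gamma>0(1) take] rhom_in[OF \<gamma>1(1) drop0]] .
      also have "\<dots> = \<beta> (seq_take m x) + \<beta> (seq_shift m (seq_drop m x))"
        using \<gamma>0(2) take \<gamma>1(2) drop0 dsum_1_single[OF drop] by simp
      also have "\<dots> = \<beta> x"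
        using rhom_eq_copair[OF M \<beta> x] unfolding copair_def by simp
      finally show ?thesis .
    qed
    ultimately show ?case by auto
  qed
qed

lemma Int_image_eq_image_ker_copair:
  assumes M: "is_rmod A s"
    and f: "rhom (dsum k A) (dact s) B t f" and g: "rhom (dsum l A) (dact s) B t g"
  shows "f ` dsum k A \<inter> g ` dsum l A
    = (\<lambda>x. f (seq_take k x)) ` {x \<in> dsum (k + l) A. copair k f g x = 0}"
proof (intro equalityI subsetI)
  fix y assume "y \<in> f ` dsum k A \<inter> g ` dsum l A"
  then obtain u v where u: "u \<in> dsum k A" "y = f u" and v: "v \<in> dsum l A" "y = g v" by blast
  have "- v \<in> dsum l A" using rmod_uminus[OF is_rmod_dsum[OF M] v(1)] .
  moreover have "copair k f g (u + seq_shift k (- v)) = 0"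
    unfolding copair_plus_shift[OF u(1)] rhom_uminus[OF is_rmod_dsum[OF M] g v(1)]
    using u(2) v(2) by simp
  ultimately have "u + seq_shift k (- v) \<in> {x \<in> dsum (k + l) A. copair k f g x = 0}"
    using dsum_plus_shift[OF M u(1)] by blast
  moreover have "y = f (seq_take k (u + seq_shift k (- v)))"
    using seq_take_plus_shift[OF u(1)] u(2) by simp
  ultimately show "y \<in> (\<lambda>x. f (seq_take k x)) ` {x \<in> dsum (k + l) A. copair k f g x = 0}"
    by blast
next
  fix y assume "y \<in> (\<lambda>x. f (seq_take k x)) ` {x \<in> dsum (k + l) A. copair k f g x = 0}"
  then obtain x where x: "x \<in> dsum (k + l) A" "copair k f g x = 0" "y = f (seq_take k x)"
    by blast
  have take: "seq_take k x \<in> dsum k A" and drop: "- seq_drop k x \<in> dsum l A"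
    using seq_take_dsum[OF rmod_zero[OF M] x(1)] rmod_uminus[OF is_rmod_dsum[OF M] seq_drop_dsum[OF x(1)]] .
  have "f (seq_take k x) = - g (seq_drop k x)"
    using x(2) unfolding copair_def by (simp add: eq_neg_iff_add_eq_0)
  then have "y = g (- seq_drop k x)"
    using x(3) rhom_uminus[OF is_rmod_dsum[OF M] g seq_drop_dsum[OF x(1)]] by simp
  then show "y \<in> f ` dsum k A \<inter> g ` dsum l A" using x(3) take drop by blast
qed

lemma coherent_fin_gen_Int:
  assumes M: "is_rmod A s" and co: "coherent A s A s"
    and N1: "N1 \<subseteq> A" "fin_gen A s N1 s" and N2: "N2 \<subseteq> A" "fin_gen A s N2 s"
  shows "fin_gen A s (N1 \<inter> N2) s"
proof -
  obtain k f where k: "k > 0" and f: "rhom (dsum k A) (dact s) N1 s f" "f ` dsum k A = N1"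
    using N1(2) unfolding fin_gen_def by blast
  obtain l g where g: "rhom (dsum l A) (dact s) N2 s g" "g ` dsum l A = N2"
    using N2(2) unfolding fin_gen_def by blast
  have fA: "rhom (dsum k A) (dact s) A s f"
    using rhom_cod[OF f(1)] f(2) N1(1) by blast
  have gA: "rhom (dsum l A) (dact s) A s g"
    using rhom_cod[OF g(1)] g(2) N2(1) by blast
  define K where "K = {x \<in> dsum (k + l) A. copair k f g x = 0}"
  have "fin_gen A s K (dact s)"
    using co rhom_copair[OF M M fA gA] k unfolding coherent_def K_def by simp
  moreover have "rhom K (dact s) A s (\<lambda>x. f (seq_take k x))"
    by (rule rhom_restrict[OF rhom_comp[OF rhom_seq_take[OF M] fA]]) (auto simp: K_def)
  ultimately have "fin_gen A s ((\<lambda>x. f (seq_take k x)) ` K) s" by (rule fin_gen_image)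
  then show ?thesis
    unfolding K_def Int_image_eq_image_ker_copair[OF M fA gA, symmetric] f(2) g(2) .
qed

lemma coherent_fin_gen_ker:
  assumes M: "is_rmod A s" and co: "coherent A s A s" and \<phi>: "rhom A s A s \<phi>"
  shows "fin_gen A s {x \<in> A. \<phi> x = 0} s"
proof -
  have ev: "rhom (dsum 1 A) (dact s) A s (\<lambda>v. v 0)" using rhom_eval[OF M] .
  have "fin_gen A s {v \<in> dsum 1 A. \<phi> (v 0) = 0} (dact s)"
    using co rhom_comp[OF ev \<phi>] unfolding coherent_def by simp
  moreover have "rhom {v \<in> dsum 1 A. \<phi> (v 0) = 0} (dact s) A s (\<lambda>v. v 0)"
    by (rule rhom_restrict[OF ev]) blast
  ultimately have "fin_gen A s ((\<lambda>v. v 0) ` {v \<in> dsum 1 A. \<phi> (v 0) = 0}) s"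
    by (rule fin_gen_image)
  then show ?thesis unfolding ker_dsum_1 by (simp add: image_image)
qed

lemma ker_copair_eq:
  assumes M: "is_rmod A s"
    and f: "rhom (dsum k A) (dact s) A s f" and g: "rhom (dsum l A) (dact s) A s g"
    and \<alpha>: "\<alpha> ` dsum m A = f ` dsum k A \<inter> g ` dsum l A"
    and \<gamma>: "rhom (dsum m A) (dact s) (dsum k A) (dact s) \<gamma>" "\<forall>z\<in>dsum m A. f (\<gamma> z) = \<alpha> z"
    and \<delta>: "rhom (dsum m A) (dact s) (dsum l A) (dact s) \<delta>" "\<forall>z\<in>dsum m A. g (\<delta> z) = - \<alpha> z"
  shows "{x \<in> dsum (k + l) A. copair k f g x = 0}
    = (\<lambda>z. \<gamma> z + seq_shift k (\<delta> z)) ` dsum m A + {u \<in> dsum k A. f u = 0}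
      + seq_shift k ` {v \<in> dsum l A. g v = 0}"
    (is "?K = ?S + ?Kf + ?Kg")
proof (intro equalityI subsetI)
  have Mk: "is_rmod (dsum k A) (dact s)" and Ml: "is_rmod (dsum l A) (dact s)"
    using is_rmod_dsum[OF M] by blast+
  fix x assume "x \<in> ?K"
  then have x: "x \<in> dsum (k + l) A" "f (seq_take k x) + g (seq_drop k x) = 0"
    unfolding copair_def by auto
  define u v where "u = seq_take k x" and "v = seq_drop k x"
  have u: "u \<in> dsum k A" and v: "v \<in> dsum l A"
    unfolding u_def v_def using seq_take_dsum[OF rmod_zero[OF M] x(1)] seq_drop_dsum[OF x(1)] .
  have "f u = - g v" using x(2) by (simp add: u_def v_def eq_neg_iff_add_eq_0)
  then have "f u = g (- v)" using rhom_uminus[OF Ml g v] by simp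
  then have "f u \<in> \<alpha> ` dsum m A" using \<alpha> u rmod_uminus[OF Ml v] by blast
  then obtain z where z: "z \<in> dsum m A" "f u = \<alpha> z" by blast
  have \<gamma>z: "\<gamma> z \<in> dsum k A" and \<delta>z: "\<delta> z \<in> dsum l A"
    using rhom_in[OF \<gamma>(1) z(1)] rhom_in[OF \<delta>(1) z(1)] .
  have "u - \<gamma> z \<in> ?Kf"
    using rmod_diff[OF Mk u \<gamma>z] rhom_diff[OF Mk f u \<gamma>z] \<gamma>(2) z by simp
  moreover have "g (v - \<delta> z) = g v + f u"
    using rhom_diff[OF Ml g v \<delta>z] \<delta>(2) z by simp
  then have "v - \<delta> z \<in> {v \<in> dsum l A. g v = 0}"
    using rmod_diff[OF Ml v \<delta>z] x(2) by (simp add: u_def v_def add.commute)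
  moreover have "x = (\<gamma> z + seq_shift k (\<delta> z)) + (u - \<gamma> z) + seq_shift k (v - \<delta> z)"
    using seq_take_plus_drop[of x k] rhom_diff[OF Ml rhom_seq_shift[OF M] v \<delta>z]
    by (simp add: u_def v_def)
  ultimately show "x \<in> ?S + ?Kf + ?Kg" using z(1) by blast
next
  fix x assume "x \<in> ?S + ?Kf + ?Kg"
  then obtain z u v where z: "z \<in> dsum m A" and u: "u \<in> dsum k A" "f u = 0"
    and v: "v \<in> dsum l A" "g v = 0" and x: "x = (\<gamma> z + seq_shift k (\<delta> z)) + u + seq_shift k v"
    by (auto elim!: set_plus_elim)
  have \<gamma>z: "\<gamma> z \<in> dsum k A" and \<delta>z: "\<delta> z \<in> dsum l A"
    using rhom_in[OF \<gamma>(1) z] rhom_in[OF \<delta>(1) z] .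
  have \<gamma>u: "\<gamma> z + u \<in> dsum k A" and \<delta>v: "\<delta> z + v \<in> dsum l A"
    using rmod_add[OF is_rmod_dsum[OF M]] \<gamma>z u(1) \<delta>z v(1) by blast+
  have x': "x = (\<gamma> z + u) + seq_shift k (\<delta> z + v)"
    using x rhom_add[OF rhom_seq_shift[OF M] \<delta>z v(1), of k] by (simp add: ac_simps)
  have "copair k f g x = f (\<gamma> z) + f u + (g (\<delta> z) + g v)"
    unfolding x' copair_plus_shift[OF \<gamma>u] using rhom_add[OF f \<gamma>z u(1)] rhom_add[OF g \<delta>z v(1)] by simp
  then have "copair k f g x = 0" using \<gamma>(2) \<delta>(2) z u(2) v(2) by simp
  then show "x \<in> ?K" using dsum_plus_shift[OF M \<gamma>u \<delta>v] x' by simp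
qed

lemma fin_gen_ker_copair:
  assumes M: "is_rmod A s" and ip: "intr_proj A s"
    and f: "rhom (dsum k A) (dact s) A s f" and g: "rhom (dsum l A) (dact s) A s g"
    and Int_fin_gen: "fin_gen A s (f ` dsum k A \<inter> g ` dsum l A) s"
    and ker_f: "fin_gen A s {u \<in> dsum k A. f u = 0} (dact s)"
    and ker_g: "fin_gen A s {v \<in> dsum l A. g v = 0} (dact s)"
  shows "fin_gen A s {x \<in> dsum (k + l) A. copair k f g x = 0} (dact s)"
proof -
  have Mk: "is_rmod (dsum k A) (dact s)" and Ml: "is_rmod (dsum l A) (dact s)"
    and Mkl: "is_rmod (dsum (k + l) A) (dact s)"
    using is_rmod_dsum[OF M] by blast+
  obtain m \<alpha> where \<alpha>: "rhom (dsum m A) (dact s) (f ` dsum k A \<inter> g ` dsum l A) s \<alpha>"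
    "\<alpha> ` dsum m A = f ` dsum k A \<inter> g ` dsum l A"
    using Int_fin_gen unfolding fin_gen_def by blast
  have \<alpha>f: "rhom (dsum m A) (dact s) (f ` dsum k A) s \<alpha>"
    using rhom_cod[OF \<alpha>(1)] \<alpha>(2) by blast
  have \<alpha>g: "rhom (dsum m A) (dact s) (g ` dsum l A) s \<alpha>"
    using rhom_cod[OF \<alpha>(1)] \<alpha>(2) by blast
  obtain \<gamma> where \<gamma>: "rhom (dsum m A) (dact s) (dsum k A) (dact s) \<gamma>" "\<forall>z\<in>dsum m A. f (\<gamma> z) = \<alpha> z"
    using intr_proj_lift[OF M ip submod_image[OF Mk f] rhom_image[OF f] refl \<alpha>f] by blast
  obtain \<delta> where \<delta>: "rhom (dsum m A) (dact s) (dsum l A) (dact s) \<delta>" "\<forall>z\<in>dsum m A. g (\<delta> z) = - \<alpha> z"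
    using intr_proj_lift[OF M ip submod_image[OF Ml g] rhom_image[OF g] refl
        rhom_uminus_fun[OF \<alpha>g is_rmod_image[OF Ml g]]] by blast
  have dsum_k: "dsum k A \<subseteq> dsum (k + l) A" using dsum_mono[OF le_add1 rmod_zero[OF M]] .
  have "rhom (dsum m A) (dact s) (dsum (k + l) A) (dact s) \<gamma>"
    using rhom_cod[OF \<gamma>(1)] rhom_in[OF \<gamma>(1)] dsum_k by blast
  note \<Phi> = rhom_plus[OF this rhom_comp[OF \<delta>(1) rhom_seq_shift[OF M]] Mkl]
  have S: "fin_gen A s ((\<lambda>z. \<gamma> z + seq_shift k (\<delta> z)) ` dsum m A) (dact s)"
    "(\<lambda>z. \<gamma> z + seq_shift k (\<delta> z)) ` dsum m A \<subseteq> dsum (k + l) A"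
    using fin_gen_hom_image[OF M \<Phi>] rhom_in[OF \<Phi>] by blast+
  have Kf: "{u \<in> dsum k A. f u = 0} \<subseteq> dsum (k + l) A" using dsum_k by blast
  have shift: "rhom {v \<in> dsum l A. g v = 0} (dact s) (dsum (k + l) A) (dact s) (seq_shift k)"
    by (rule rhom_restrict[OF rhom_seq_shift[OF M]]) blast
  have Kg: "fin_gen A s (seq_shift k ` {v \<in> dsum l A. g v = 0}) (dact s)"
    "seq_shift k ` {v \<in> dsum l A. g v = 0} \<subseteq> dsum (k + l) A"
    using fin_gen_image[OF ker_g shift] rhom_in[OF shift] by blast+
  show ?thesis
    unfolding ker_copair_eq[OF M f g \<alpha>(2) \<gamma> \<delta>]
    using fin_gen_set_plus[OF M Mkl fin_gen_set_plus[OF M Mkl S(1,2) ker_f Kf] _ Kg]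
      set_plus_subset_rmod[OF Mkl S(2) Kf] .
qed

lemma fin_gen_ker_dsum:
  assumes M: "is_rmod A s" and ip: "intr_proj A s"
    and Int_fin_gen: "\<forall>N1 N2. submod N1 A s \<and> submod N2 A s \<and> fin_gen A s N1 s \<and> fin_gen A s N2 s
      \<longrightarrow> fin_gen A s (N1 \<inter> N2) s"
    and ker_fin_gen: "\<forall>\<phi>. rhom A s A s \<phi> \<longrightarrow> fin_gen A s {x \<in> A. \<phi> x = 0} s"
    and \<rho>: "rhom (dsum n A) (dact s) A s \<rho>"
  shows "fin_gen A s {x \<in> dsum n A. \<rho> x = 0} (dact s)"
  using \<rho>
proof (induction n arbitrary: \<rho>)
  case 0
  then have "{x \<in> dsum 0 A. \<rho> x = 0} = {0}"
    using rhom_zero[OF is_rmod_dsum[OF M] "0.prems"] by (auto simp: dsum_0 zero_fun_def)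
  then show ?case using fin_gen_zero[OF M is_rmod_dsum[OF M]] by simp
next
  case (Suc n)
  have \<rho>: "rhom (dsum (n + 1) A) (dact s) A s \<rho>" using Suc.prems by simp
  have f: "rhom (dsum n A) (dact s) A s \<rho>"
    by (rule rhom_restrict[OF \<rho> dsum_mono[OF le_add1 rmod_zero[OF M]]])
  define g where "g v = \<rho> (seq_shift n v)" for v
  have g: "rhom (dsum 1 A) (dact s) A s g"
    unfolding g_def using rhom_comp[OF rhom_seq_shift[OF M] \<rho>] .
  have "fin_gen A s (\<rho> ` dsum n A \<inter> g ` dsum 1 A) s"
    using Int_fin_gen submod_image[OF is_rmod_dsum[OF M] f] submod_image[OF is_rmod_dsum[OF M] g]
      fin_gen_hom_image[OF M f] fin_gen_hom_image[OF M g] by blast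
  moreover have "fin_gen A s {v \<in> dsum 1 A. g v = 0} (dact s)"
  proof -
    have single: "rhom {a \<in> A. g (seq_single a) = 0} s (dsum 1 A) (dact s) seq_single"
      by (rule rhom_restrict[OF rhom_seq_single[OF M]]) blast
    have "fin_gen A s {a \<in> A. g (seq_single a) = 0} s"
      using ker_fin_gen rhom_comp[OF rhom_seq_single[OF M] g] by blast
    from fin_gen_image[OF this single] show ?thesis unfolding ker_dsum_1 .
  qed
  ultimately have "fin_gen A s {x \<in> dsum (n + 1) A. copair n \<rho> g x = 0} (dact s)"
    using fin_gen_ker_copair[OF M ip f g] Suc.IH[OF f] by blast
  moreover have "{x \<in> dsum (n + 1) A. copair n \<rho> g x = 0} = {x \<in> dsum (Suc n) A. \<rho> x = 0}"
    using rhom_eq_copair[OF M \<rho>] unfolding g_def by auto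
  ultimately show ?case by simp
qed

theorem mainTheorem13:
  fixes A :: "'m::ab_group_add set" and s :: "'m \<Rightarrow> 'r::ring_1 \<Rightarrow> 'm"
  assumes "is_rmod A s"
  defines "cond_ii \<equiv>
     (\<forall>N1 N2. submod N1 A s \<and> submod N2 A s \<and> fin_gen A s N1 s \<and> fin_gen A s N2 s
        \<longrightarrow> fin_gen A s (N1 \<inter> N2) s)
     \<and> (\<forall>\<phi>. rhom A s A s \<phi> \<longrightarrow> fin_gen A s {x \<in> A. \<phi> x = 0} s)"
  shows "(coherent A s A s \<longrightarrow> cond_ii)
    \<and> (intr_proj A s \<longrightarrow> (coherent A s A s \<longleftrightarrow> cond_ii))"
proof -
  have i_ii: "cond_ii" if "coherent A s A s"
    unfolding cond_ii_def submod_def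
    using coherent_fin_gen_Int[OF assms(1) that] coherent_fin_gen_ker[OF assms(1) that] by blast
  have ii_i: "coherent A s A s" if "intr_proj A s" and cond_ii
    unfolding coherent_def
    using fin_gen_self[OF assms(1)] fin_gen_ker_dsum[OF assms(1) \<open>intr_proj A s\<close>] \<open>cond_ii\<close>
    unfolding cond_ii_def by blast
  show ?thesis using i_ii ii_i by blast
qed

end
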